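(* Assume $R_1(i)\neq0$ for $2\le i\le I-1$, $R_2(j)\neq0$ for $2\le j\le J-1$, and that $\alpha,\beta\in\mathbb R$ satisfy $(\alpha+1)R_1(I-1)+(\eta_{1,I-1}^n-\epsilon_1)\neq0$ and $(\beta-1)R_2(2)+(\eta_{2,2}^n+\epsilon_2)\neq0$. Let $(e_1^m,e_2^m)_{m\ge0}$ be the error iterates of the linearized implicit Schwarz iteration for the Burgers equations with the Robin-type (optimized) interface condition defined below. Then, with $$\bar\rho=-\frac{(\alpha+1)(\eta_{2,2}^n+\epsilon_2)-R_2(2)}{(\alpha+1)R_1(I-1)+\eta_{1,I-1}^n-\epsilon_1}\cdot\frac{(\beta-1)(\eta_{1,I-1}^n-\epsilon_1)-R_1(I-1)}{(\beta-1)R_2(2)+\eta_{2,2}^n+\epsilon_2},$$ one has, for every $m\ge1$, $e_{1,i}^{m+2}=\bar\rho\,e_{1,i}^m$ for all $1\le i\le I$ and $e_{2,j}^{m+2}=\bar\rho\,e_{2,j}^m$ for all $1\le j\le J$.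
   Context: Setting (implicit scheme, node-dependent linearized advection). Integers $I,J\ge3$; grid 1 has nodes $1,\dots,I$, grid 2 has nodes $1,\dots,J$, with node $I-1$ of grid 1 coinciding with node 1 of grid 2 and node $I$ of grid 1 coinciding with node 2 of grid 2. Real constants $\epsilon_k,\gamma_k$ and real numbers $\eta_{1,i}^n$ ($2\le i\le I-1$), $\eta_{2,j}^n$ ($2\le j\le J-1$) are given. Define recursively $R_1(2)=1+2\epsilon_1+\gamma_1$, $R_1(i)=1+2\epsilon_1+\gamma_1+\dfrac{(\eta_{1,i-1}^n-\epsilon_1)(\eta_{1,i}^n+\epsilon_1)}{R_1(i-1)}$ for $i=3,\dots,I-1$; $R_2(J-1)=1+2\epsilon_2+\gamma_2$, $R_2(j)=1+2\epsilon_2+\gamma_2+\dfrac{(\eta_{2,j}^n-\epsilon_2)(\eta_{2,j+1}^n+\epsilon_2)}{R_2(j+1)}$ for $j=J-2,\dots,2$. Error iteration with optimized interface condition: $e_1^0\in\mathbb R^I$, $e_2^0\in\mathbb R^J$ arbitrary; for $m\ge1$: $e_{1,1}^m=0$; $-(\eta_{1,i}^n+\epsilon_1)e_{1,i-1}^m+(1+2\epsilon_1+\gamma_1)e_{1,i}^m+(\eta_{1,i}^n-\epsilon_1)e_{1,i+1}^m=0$ for $2\le i\le I-1$; $(e_{1,I}^m-e_{1,I-1}^m)+\alpha e_{1,I}^m=(e_{2,2}^{m-1}-e_{2,1}^{m-1})+\alpha e_{2,2}^{m-1}$; $e_{2,J}^m=0$; $-(\eta_{2,j}^n+\epsilon_2)e_{2,j-1}^m+(1+2\epsilon_2+\gamma_2)e_{2,j}^m+(\eta_{2,j}^n-\epsilon_2)e_{2,j+1}^m=0$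 for $2\le j\le J-1$; $(e_{2,2}^m-e_{2,1}^m)+\beta e_{2,1}^m=(e_{1,I}^{m-1}-e_{1,I-1}^{m-1})+\beta e_{1,I-1}^{m-1}$. *)

theory Defs
  imports Main "HOL.Real"
begin

fun R1 :: "real \<Rightarrow> real \<Rightarrow> (nat \<Rightarrow> real) \<Rightarrow> nat \<Rightarrow> real" where
  "R1 eps gam eta i =
     (if i \<le> 2 then 1 + 2 * eps + gam
      else 1 + 2 * eps + gam + (eta (i - 1) - eps) * (eta i + eps) / R1 eps gam eta (i - 1))"

function R2 :: "real \<Rightarrow> real \<Rightarrow> (nat \<Rightarrow> real) \<Rightarrow> nat \<Rightarrow> nat \<Rightarrow> real" where
  "R2 eps gam eta J j =
     (if J - 1 \<le> j then 1 + 2 * eps + gam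
      else 1 + 2 * eps + gam + (eta j - eps) * (eta (j + 1) + eps) / R2 eps gam eta J (j + 1))"
  by pat_completeness auto
termination
  by (relation "measure (\<lambda>(eps, gam, eta, J, j). J - j)") auto

end

theory Submission
  imports Defs
begin

text \<open>Gaussian elimination from the outer Dirichlet boundary (the Thomas algorithm) shows that
  every solution of the homogeneous discrete problem on a subdomain is fixed by a single value
  at the interface, through factors that do not depend on the iteration index.  Hence the Robin
  condition makes the interface value of one subdomain a fixed multiple of the interface value
  of the other subdomain at the previous iteration, and two iterations multiply every entry by
  the product \<open>\<rho>\<close> of these two factors.\<close>

declare R1.simps[simp del] R2.simps[simp del]

definition left_homogeneous :: "real \<Rightarrow> real \<Rightarrow> (nat \<Rightarrow> real) \<Rightarrow> nat \<Rightarrow> (nat \<Rightarrow> real) \<Rightarrow> bool" where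
  "left_homogeneous eps gam eta I e \<longleftrightarrow> e 1 = 0 \<and>
     (\<forall>i. 2 \<le> i \<and> i \<le> I - 1 \<longrightarrow>
        - (eta i + eps) * e (i - 1) + (1 + 2 * eps + gam) * e i + (eta i - eps) * e (i + 1) = 0)"

definition right_homogeneous :: "real \<Rightarrow> real \<Rightarrow> (nat \<Rightarrow> real) \<Rightarrow> nat \<Rightarrow> (nat \<Rightarrow> real) \<Rightarrow> bool" where
  "right_homogeneous eps gam eta J e \<longleftrightarrow> e J = 0 \<and>
     (\<forall>j. 2 \<le> j \<and> j \<le> J - 1 \<longrightarrow>
        - (eta j + eps) * e (j - 1) + (1 + 2 * eps + gam) * e j + (eta j - eps) * e (j + 1) = 0)"

lemma left_homogeneous_sweep:
  assumes hom: "left_homogeneous eps gam eta I e"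
    and nz: "\<And>i. 2 \<le> i \<Longrightarrow> i \<le> I - 1 \<Longrightarrow> R1 eps gam eta i \<noteq> 0"
    and j: "2 \<le> j" "j \<le> I - 1"
  shows "R1 eps gam eta j * e j = - (eta j - eps) * e (j + 1)"
proof -
  have e1: "e 1 = 0"
    and eq: "\<And>i. 2 \<le> i \<Longrightarrow> i \<le> I - 1 \<Longrightarrow>
      - (eta i + eps) * e (i - 1) + (1 + 2 * eps + gam) * e i + (eta i - eps) * e (i + 1) = 0"
    using hom by (auto simp: left_homogeneous_def)
  show ?thesis
    using j(1) j
  proof (induction j rule: dec_induct)
    case base
    have "R1 eps gam eta 2 = 1 + 2 * eps + gam" by (simp add: R1.simps)
    with eq[of 2] base e1 show ?case by (simp add: algebra_simps)
  next
    case (step n)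
    have IH: "R1 eps gam eta n * e n = - (eta n - eps) * e (n + 1)" using step by simp
    have Rn: "R1 eps gam eta n \<noteq> 0" using step nz by simp
    have R: "R1 eps gam eta (Suc n) = 1 + 2 * eps + gam
        + (eta n - eps) * (eta (Suc n) + eps) / R1 eps gam eta n"
      using step by (subst R1.simps) simp
    have en: "e n = - (eta n - eps) * e (n + 1) / R1 eps gam eta n"
      using IH Rn by (simp add: field_simps)
    have eq_n: "- (eta (Suc n) + eps) * e n + (1 + 2 * eps + gam) * e (Suc n)
        + (eta (Suc n) - eps) * e (Suc n + 1) = 0"
      using eq[of "Suc n"] step by simp
    show ?case unfolding R using eq_n en Rn by (simp add: field_simps)
  qed
qed

lemma right_homogeneous_sweep:
  assumes hom: "right_homogeneous eps gam eta J e" and "J \<ge> 3"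
    and nz: "\<And>j. 2 \<le> j \<Longrightarrow> j \<le> J - 1 \<Longrightarrow> R2 eps gam eta J j \<noteq> 0"
    and j: "2 \<le> j" "j \<le> J - 1"
  shows "R2 eps gam eta J j * e j = (eta j + eps) * e (j - 1)"
proof -
  have eJ: "e J = 0"
    and eq: "\<And>j. 2 \<le> j \<Longrightarrow> j \<le> J - 1 \<Longrightarrow>
      - (eta j + eps) * e (j - 1) + (1 + 2 * eps + gam) * e j + (eta j - eps) * e (j + 1) = 0"
    using hom by (auto simp: right_homogeneous_def)
  show ?thesis
    using j(2) j
  proof (induction j rule: inc_induct)
    case base
    have "R2 eps gam eta J (J - 1) = 1 + 2 * eps + gam" by (simp add: R2.simps)
    moreover have "J - 1 + 1 = J" using \<open>J \<ge> 3\<close> by simp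
    ultimately show ?case using eq[of "J - 1"] base eJ by (simp add: algebra_simps)
  next
    case (step n)
    have IH: "R2 eps gam eta J (Suc n) * e (Suc n) = (eta (Suc n) + eps) * e n"
      using step by simp
    have Rn: "R2 eps gam eta J (Suc n) \<noteq> 0" using step nz by simp
    have R: "R2 eps gam eta J n = 1 + 2 * eps + gam
        + (eta n - eps) * (eta (Suc n) + eps) / R2 eps gam eta J (Suc n)"
      using step by (subst R2.simps) simp
    have en: "e (Suc n) = (eta (Suc n) + eps) * e n / R2 eps gam eta J (Suc n)"
      using IH Rn by (simp add: field_simps)
    have eq_n: "- (eta n + eps) * e (n - 1) + (1 + 2 * eps + gam) * e n
        + (eta n - eps) * e (Suc n) = 0"
      using eq[of n] step by simp
    show ?case unfolding R using eq_n en Rn by (simp add: field_simps)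
  qed
qed

lemma proportional_downwards:
  fixes e f g :: "nat \<Rightarrow> real"
  assumes e: "\<And>i. lo \<le> i \<Longrightarrow> i < hi \<Longrightarrow> e i = g i * e (Suc i)"
    and f: "\<And>i. lo \<le> i \<Longrightarrow> i < hi \<Longrightarrow> f i = g i * f (Suc i)"
    and top: "e hi = c * f hi" and "lo \<le> i" "i \<le> hi"
  shows "e i = c * f i"
  using \<open>i \<le> hi\<close> \<open>lo \<le> i\<close>
proof (induction i rule: inc_induct)
  case (step n)
  then show ?case using e[of n] f[of n] by simp
qed (rule top)

lemma proportional_upwards:
  fixes e f g :: "nat \<Rightarrow> real"
  assumes e: "\<And>j. lo \<le> j \<Longrightarrow> j < hi \<Longrightarrow> e (Suc j) = g j * e j"
    and f: "\<And>j. lo \<le> j \<Longrightarrow> j < hi \<Longrightarrow> f (Suc j) = g j * f j"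
    and bottom: "e lo = c * f lo" and "lo \<le> j" "j \<le> hi"
  shows "e j = c * f j"
  using \<open>lo \<le> j\<close> \<open>j \<le> hi\<close>
proof (induction j rule: dec_induct)
  case (step n)
  then show ?case using e[of n] f[of n] by simp
qed (rule bottom)

lemma left_homogeneous_proportional:
  assumes he: "left_homogeneous eps gam eta I e" and hf: "left_homogeneous eps gam eta I f"
    and nz: "\<And>i. 2 \<le> i \<Longrightarrow> i \<le> I - 1 \<Longrightarrow> R1 eps gam eta i \<noteq> 0"
    and top: "e I = c * f I" and i: "1 \<le> i" "i \<le> I"
  shows "e i = c * f i"
proof (cases "i = 1")
  case True
  then show ?thesis using he hf by (simp add: left_homogeneous_def)
next
  case False
  let ?g = "\<lambda>i. - (eta i - eps) / R1 eps gam eta i"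
  have sweep: "x n = ?g n * x (Suc n)"
    if "left_homogeneous eps gam eta I x" "2 \<le> n" "n < I" for x n
    using left_homogeneous_sweep[OF that(1) nz, of n] nz[of n] that(2,3) by (simp add: field_simps)
  show ?thesis
  proof (rule proportional_downwards[where g = ?g])
    show "e n = ?g n * e (Suc n)" if "2 \<le> n" "n < I" for n using sweep[OF he that] .
    show "f n = ?g n * f (Suc n)" if "2 \<le> n" "n < I" for n using sweep[OF hf that] .
  qed (use top False i in auto)
qed

lemma right_homogeneous_proportional:
  assumes he: "right_homogeneous eps gam eta J e" and hf: "right_homogeneous eps gam eta J f"
    and "J \<ge> 3"
    and nz: "\<And>j. 2 \<le> j \<Longrightarrow> j \<le> J - 1 \<Longrightarrow> R2 eps gam eta J j \<noteq> 0"
    and bottom: "e 1 = c * f 1" and j: "1 \<le> j" "j \<le> J"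
  shows "e j = c * f j"
proof (cases "j = J")
  case True
  then show ?thesis using he hf by (simp add: right_homogeneous_def)
next
  case False
  let ?g = "\<lambda>j. (eta (Suc j) + eps) / R2 eps gam eta J (Suc j)"
  have sweep: "x (Suc n) = ?g n * x n"
    if "right_homogeneous eps gam eta J x" "1 \<le> n" "n < J - 1" for x n
    using right_homogeneous_sweep[OF that(1) \<open>J \<ge> 3\<close> nz, of "Suc n"] nz[of "Suc n"] that(2,3)
    by (simp add: field_simps)
  show ?thesis
  proof (rule proportional_upwards[where g = ?g])
    show "e (Suc n) = ?g n * e n" if "1 \<le> n" "n < J - 1" for n using sweep[OF he that] .
    show "f (Suc n) = ?g n * f n" if "1 \<le> n" "n < J - 1" for n using sweep[OF hf that] .
  qed (use bottom False j in auto)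
qed

lemma left_homogeneous_last:
  assumes "left_homogeneous eps gam eta I e" and "I \<ge> 3"
    and "\<And>i. 2 \<le> i \<Longrightarrow> i \<le> I - 1 \<Longrightarrow> R1 eps gam eta i \<noteq> 0"
  shows "R1 eps gam eta (I - 1) * e (I - 1) = - (eta (I - 1) - eps) * e I"
  using left_homogeneous_sweep[OF assms(1,3), of "I - 1"] \<open>I \<ge> 3\<close> by simp

lemma right_homogeneous_first:
  assumes "right_homogeneous eps gam eta J e" and "J \<ge> 3"
    and "\<And>j. 2 \<le> j \<Longrightarrow> j \<le> J - 1 \<Longrightarrow> R2 eps gam eta J j \<noteq> 0"
  shows "R2 eps gam eta J 2 * e 2 = (eta 2 + eps) * e 1"
  using right_homogeneous_sweep[OF assms, of 2] \<open>J \<ge> 3\<close> by simp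

lemma left_interface_gain:
  fixes e f :: "nat \<Rightarrow> real"
  assumes last: "R * e (I - 1) = - b * e I" and first: "S * f 2 = a * f 1"
    and "S \<noteq> 0" and D: "(\<alpha> + 1) * R + b \<noteq> 0"
    and robin: "(e I - e (I - 1)) + \<alpha> * e I = (f 2 - f 1) + \<alpha> * f 2"
  shows "e I = R / ((\<alpha> + 1) * R + b) * (((\<alpha> + 1) * a - S) / S) * f 1"
proof -
  have "((\<alpha> + 1) * R + b) * e I = R * ((e I - e (I - 1)) + \<alpha> * e I)"
    using last by (simp add: algebra_simps)
  also have "\<dots> = R * (((\<alpha> + 1) * (S * f 2) - S * f 1) / S)"
    unfolding robin using \<open>S \<noteq> 0\<close> by (simp add: field_simps)
  also have "\<dots> = R * (((\<alpha> + 1) * a - S) / S) * f 1"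
    unfolding first by (simp add: algebra_simps)
  finally show ?thesis using D by (metis nonzero_mult_div_cancel_left times_divide_eq_left)
qed

lemma right_interface_gain:
  fixes e f :: "nat \<Rightarrow> real"
  assumes first: "S * e 2 = a * e 1" and last: "R * f (I - 1) = - b * f I"
    and "R \<noteq> 0" and D: "(\<beta> - 1) * S + a \<noteq> 0"
    and robin: "(e 2 - e 1) + \<beta> * e 1 = (f I - f (I - 1)) + \<beta> * f (I - 1)"
  shows "e 1 = S / ((\<beta> - 1) * S + a) * ((R - (\<beta> - 1) * b) / R) * f I"
proof -
  have "((\<beta> - 1) * S + a) * e 1 = S * ((e 2 - e 1) + \<beta> * e 1)"
    using first by (simp add: algebra_simps)
  also have "\<dots> = S * ((R * f I + (\<beta> - 1) * (R * f (I - 1))) / R)"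
    unfolding robin using \<open>R \<noteq> 0\<close> by (simp add: field_simps)
  also have "\<dots> = S * ((R - (\<beta> - 1) * b) / R) * f I"
    unfolding last by (simp add: algebra_simps)
  finally show ?thesis using D by (metis nonzero_mult_div_cancel_left times_divide_eq_left)
qed

lemma interface_gains_product:
  fixes R S a b \<alpha> \<beta> :: real
  assumes "R \<noteq> 0" "S \<noteq> 0"
  shows "R / ((\<alpha> + 1) * R + b) * (((\<alpha> + 1) * a - S) / S)
      * (S / ((\<beta> - 1) * S + a) * ((R - (\<beta> - 1) * b) / R))
    = - (((\<alpha> + 1) * a - S) / ((\<alpha> + 1) * R + b)) * (((\<beta> - 1) * b - R) / ((\<beta> - 1) * S + a))"
  using assms by (simp add: divide_simps) (simp add: algebra_simps)

theorem proposition5p4: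
  fixes I J :: nat
    and eps1 gam1 eps2 gam2 \<alpha> \<beta> :: real
    and eta1 eta2 :: "nat \<Rightarrow> real"
    and e1 e2 :: "nat \<Rightarrow> nat \<Rightarrow> real"
  assumes "I \<ge> 3" and "J \<ge> 3"
    and R1_nz: "\<And>i. 2 \<le> i \<Longrightarrow> i \<le> I - 1 \<Longrightarrow> R1 eps1 gam1 eta1 i \<noteq> 0"
    and R2_nz: "\<And>j. 2 \<le> j \<Longrightarrow> j \<le> J - 1 \<Longrightarrow> R2 eps2 gam2 eta2 J j \<noteq> 0"
    and alpha_nz: "(\<alpha> + 1) * R1 eps1 gam1 eta1 (I - 1) + (eta1 (I - 1) - eps1) \<noteq> 0"
    and beta_nz: "(\<beta> - 1) * R2 eps2 gam2 eta2 J 2 + (eta2 2 + eps2) \<noteq> 0"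
    and bc1: "\<And>m. m \<ge> 1 \<Longrightarrow> e1 m 1 = 0"
    and int1: "\<And>m i. m \<ge> 1 \<Longrightarrow> 2 \<le> i \<Longrightarrow> i \<le> I - 1 \<Longrightarrow>
       - (eta1 i + eps1) * e1 m (i - 1) + (1 + 2 * eps1 + gam1) * e1 m i
       + (eta1 i - eps1) * e1 m (i + 1) = 0"
    and if1: "\<And>m. m \<ge> 1 \<Longrightarrow>
       (e1 m I - e1 m (I - 1)) + \<alpha> * e1 m I
       = (e2 (m - 1) 2 - e2 (m - 1) 1) + \<alpha> * e2 (m - 1) 2"
    and bc2: "\<And>m. m \<ge> 1 \<Longrightarrow> e2 m J = 0"
    and int2: "\<And>m j. m \<ge> 1 \<Longrightarrow> 2 \<le> j \<Longrightarrow> j \<le> J - 1 \<Longrightarrow>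
       - (eta2 j + eps2) * e2 m (j - 1) + (1 + 2 * eps2 + gam2) * e2 m j
       + (eta2 j - eps2) * e2 m (j + 1) = 0"
    and if2: "\<And>m. m \<ge> 1 \<Longrightarrow>
       (e2 m 2 - e2 m 1) + \<beta> * e2 m 1
       = (e1 (m - 1) I - e1 (m - 1) (I - 1)) + \<beta> * e1 (m - 1) (I - 1)"
  defines "\<rho> \<equiv> - (((\<alpha> + 1) * (eta2 2 + eps2) - R2 eps2 gam2 eta2 J 2)
                   / ((\<alpha> + 1) * R1 eps1 gam1 eta1 (I - 1) + eta1 (I - 1) - eps1))
                * (((\<beta> - 1) * (eta1 (I - 1) - eps1) - R1 eps1 gam1 eta1 (I - 1))
                   / ((\<beta> - 1) * R2 eps2 gam2 eta2 J 2 + eta2 2 + eps2))"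
  shows "\<forall>m \<ge> 1. (\<forall>i. 1 \<le> i \<and> i \<le> I \<longrightarrow> e1 (m + 2) i = \<rho> * e1 m i)
                 \<and> (\<forall>j. 1 \<le> j \<and> j \<le> J \<longrightarrow> e2 (m + 2) j = \<rho> * e2 m j)"
proof (intro allI impI)
  fix m :: nat assume "m \<ge> 1"
  define R where "R = R1 eps1 gam1 eta1 (I - 1)"
  define S where "S = R2 eps2 gam2 eta2 J 2"
  define b where "b = eta1 (I - 1) - eps1"
  define a where "a = eta2 2 + eps2"
  define c1 where "c1 = R / ((\<alpha> + 1) * R + b) * (((\<alpha> + 1) * a - S) / S)"
  define c2 where "c2 = S / ((\<beta> - 1) * S + a) * ((R - (\<beta> - 1) * b) / R)"
  have "R \<noteq> 0" "S \<noteq> 0"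
    unfolding R_def S_def using R1_nz R2_nz \<open>I \<ge> 3\<close> \<open>J \<ge> 3\<close> by auto
  have hom1: "left_homogeneous eps1 gam1 eta1 I (e1 k)" if "k \<ge> 1" for k
    using bc1 int1 that by (simp add: left_homogeneous_def)
  have hom2: "right_homogeneous eps2 gam2 eta2 J (e2 k)" if "k \<ge> 1" for k
    using bc2 int2 that by (simp add: right_homogeneous_def)
  have last1: "R * e1 k (I - 1) = - b * e1 k I" if "k \<ge> 1" for k
    unfolding R_def b_def using left_homogeneous_last[OF hom1[OF that] \<open>I \<ge> 3\<close> R1_nz] .
  have first2: "S * e2 k 2 = a * e2 k 1" if "k \<ge> 1" for k
    unfolding S_def a_def using right_homogeneous_first[OF hom2[OF that] \<open>J \<ge> 3\<close> R2_nz] .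
  have robin1: "(e1 (k + 1) I - e1 (k + 1) (I - 1)) + \<alpha> * e1 (k + 1) I
      = (e2 k 2 - e2 k 1) + \<alpha> * e2 k 2" for k
    using if1[of "k + 1"] by simp
  have robin2: "(e2 (k + 1) 2 - e2 (k + 1) 1) + \<beta> * e2 (k + 1) 1
      = (e1 k I - e1 k (I - 1)) + \<beta> * e1 k (I - 1)" for k
    using if2[of "k + 1"] by simp
  have step1: "e1 (k + 1) I = c1 * e2 k 1" if "k \<ge> 1" for k
    unfolding c1_def using left_interface_gain[OF last1[OF le_add2] first2[OF that] \<open>S \<noteq> 0\<close>
      alpha_nz[folded R_def b_def] robin1] .
  have step2: "e2 (k + 1) 1 = c2 * e1 k I" if "k \<ge> 1" for k
    unfolding c2_def using right_interface_gain[OF first2[OF le_add2] last1[OF that] \<open>R \<noteq> 0\<close>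
      beta_nz[folded S_def a_def] robin2] .
  have "\<rho> = c1 * c2"
    unfolding c1_def c2_def interface_gains_product[OF \<open>R \<noteq> 0\<close> \<open>S \<noteq> 0\<close>]
    unfolding \<rho>_def R_def S_def a_def b_def by (simp add: algebra_simps)
  then have top1: "e1 (m + 2) I = \<rho> * e1 m I" and bottom2: "e2 (m + 2) 1 = \<rho> * e2 m 1"
    using step1[of "m + 1"] step2[of "m + 1"] step1[OF \<open>m \<ge> 1\<close>] step2[OF \<open>m \<ge> 1\<close>]
    by (simp_all add: numeral_2_eq_2)
  have "m + 2 \<ge> 1" by simp
  show "(\<forall>i. 1 \<le> i \<and> i \<le> I \<longrightarrow> e1 (m + 2) i = \<rho> * e1 m i)
      \<and> (\<forall>j. 1 \<le> j \<and> j \<le> J \<longrightarrow> e2 (m + 2) j = \<rho> * e2 m j)"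
    using left_homogeneous_proportional[OF hom1 hom1 R1_nz top1]
      right_homogeneous_proportional[OF hom2 hom2 \<open>J \<ge> 3\<close> R2_nz bottom2]
      \<open>m + 2 \<ge> 1\<close> \<open>m \<ge> 1\<close>
    by blast
qed

end
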